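(* Let $d\ge2$ be an integer. For $\lambda\in(0,1)$ let $\bar F_{R,\lambda}$ be the solution of $\bar F'(w)=\lambda\bar F(w)^d-\bar F(w)$ with $\bar F(0)=1$, and let $\mathbb E[R_\lambda]=\int_0^\infty\bar F_{R,\lambda}(w)\,dw$. Then $$\lim_{\lambda\to1^-}-\frac{\mathbb E[R_\lambda]}{\log(1-\lambda)}=\frac1{d-1}.$$
   Context: $\bar F_{R,\lambda}$ is the ccdf of the limiting response time under the Red($d$) policy with i.i.d. exponential(1) replicas. *)

theory Defs
  imports "HOL-Analysis.Analysis"
begin

end

theory Submission
  imports Defs "HOL-Real_Asymp.Real_Asymp"
begin

text \<open>
  With \<open>m = d - 1\<close> the ODE is a Bernoulli equation, linearised by \<open>F^(-m)\<close>, whence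
  \<open>F(w)^m (\<lambda> + (1 - \<lambda>) exp(m w)) = 1\<close>. Split the integral at \<open>c = - ln(1 - \<lambda>) / m\<close>, where
  \<open>(1 - \<lambda>) exp(m c) = 1\<close>. On \<open>[0, c]\<close> the solution lies between \<open>1 - (1 - \<lambda>) exp(m w)\<close>
  and \<open>\<lambda>^(-1/m)\<close>, so that piece of the integral is \<open>c + O(1)\<close>; beyond \<open>c\<close> it is at most
  \<open>exp(c - w)\<close>, contributing at most 1. Hence \<open>E[R] = - ln(1 - \<lambda>) / m + O(1)\<close>.
\<close>

lemma linear_ode_zero_initial_imp_zero:
  fixes W c :: "real \<Rightarrow> real"
  assumes T: "0 \<le> T" and c: "continuous_on {0..T} c"
    and W': "\<And>x. x \<in> {0..T} \<Longrightarrow> (W has_real_derivative c x * W x) (at x within {0..T})"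
    and W0: "W 0 = 0"
  shows "W T = 0"
proof -
  define C where "C x = integral {0..x} c" for x
  have C': "(C has_real_derivative c x) (at x within {0..T})" if "x \<in> {0..T}" for x
    unfolding C_def using integral_has_real_derivative[OF c that] .
  \<comment> \<open>the integrating factor \<open>exp (- C)\<close> turns \<open>W\<close> into a constant\<close>
  have "((\<lambda>x. W x * exp (- C x)) has_real_derivative 0) (at x within {0..T})"
    if "x \<in> {0..T}" for x
  proof -
    have "((\<lambda>x. W x * exp (- C x)) has_real_derivative
           c x * W x * exp (- C x) + exp (- C x) * - c x * W x) (at x within {0..T})"
      using DERIV_mult[OF W'[OF that] DERIV_chain2[OF DERIV_exp DERIV_minus[OF C'[OF that]]]] .
    then show ?thesis by (simp add: algebra_simps)
  qed
  then obtain k where "\<forall>x\<in>{0..T}. W x * exp (- C x) = k"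
    using has_field_derivative_zero_constant[OF convex_real_interval(5)] by blast
  then have "W T * exp (- C T) = W 0 * exp (- C 0)" using T by auto
  then show ?thesis using W0 by simp
qed

lemma bernoulli_ode_closed_form:
  fixes f :: "real \<Rightarrow> real" and l :: real and m :: nat
  assumes m: "0 < m" and f0: "f 0 = 1"
    and ode: "\<And>w. 0 \<le> w \<Longrightarrow> (f has_real_derivative (l * f w ^ Suc m - f w)) (at w within {0..})"
    and T: "0 \<le> T"
  shows "f T ^ m * (l + (1 - l) * exp (real m * T)) = 1"
proof -
  define g where "g w = l + (1 - l) * exp (real m * w)" for w
  have cont: "continuous_on {0..} f"
    by (rule DERIV_continuous_on[OF ode]) auto
  have "f T ^ m * g T - 1 = 0"
  proof (rule linear_ode_zero_initial_imp_zero[where c="\<lambda>x. real m * l * f x ^ m", OF T])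
    show "continuous_on {0..T} (\<lambda>x. real m * l * f x ^ m)"
      by (intro continuous_intros continuous_on_subset[OF cont]) auto
    show "f 0 ^ m * g 0 - 1 = 0" using f0 by (simp add: g_def)
    fix x assume x: "x \<in> {0..T}"
    have f': "(f has_real_derivative (l * f x ^ Suc m - f x)) (at x within {0..T})"
      using DERIV_subset[OF ode] x by auto
    have g': "(g has_real_derivative (1 - l) * (exp (real m * x) * real m)) (at x within {0..T})"
      unfolding g_def by (auto intro!: derivative_eq_intros)
    have "((\<lambda>x. f x ^ m * g x - 1) has_real_derivative
        of_nat m * ((l * f x ^ Suc m - f x) * f x ^ (m - Suc 0)) * g x
          + (1 - l) * (exp (real m * x) * real m) * f x ^ m - 0) (at x within {0..T})"
      by (intro DERIV_diff DERIV_mult DERIV_power f' g' DERIV_const)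
    moreover obtain j where "m = Suc j" using m gr0_implies_Suc by blast
    then have "of_nat m * ((l * f x ^ Suc m - f x) * f x ^ (m - Suc 0)) * g x
          + (1 - l) * (exp (real m * x) * real m) * f x ^ m - 0
        = real m * l * f x ^ m * (f x ^ m * g x - 1)"
      by (simp add: g_def algebra_simps)
    ultimately show "((\<lambda>x. f x ^ m * g x - 1) has_real_derivative
        real m * l * f x ^ m * (f x ^ m * g x - 1)) (at x within {0..T})" by simp
  qed
  then show ?thesis by (simp add: g_def)
qed

lemma bernoulli_ode_pos:
  fixes f :: "real \<Rightarrow> real" and l :: real and m :: nat
  assumes m: "0 < m" and f0: "f 0 = 1"
    and ode: "\<And>w. 0 \<le> w \<Longrightarrow> (f has_real_derivative (l * f w ^ Suc m - f w)) (at w within {0..})"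
    and w: "0 \<le> w"
  shows "0 < f w"
proof (rule ccontr)
  assume "\<not> 0 < f w"
  moreover have "continuous_on {0..w} f"
    by (rule DERIV_continuous_on[OF DERIV_subset[OF ode]]) auto
  ultimately obtain x where "0 \<le> x" "f x = 0"
    using IVT2'[of f w 0 0] f0 w by auto
  then show False
    using bernoulli_ode_closed_form[OF m f0 ode, of x] m by (simp add: power_0_left)
qed

lemma pow_le_pow_imp_le:
  fixes x y :: real
  assumes "x ^ m \<le> y ^ m" "0 \<le> y" "0 < m"
  shows "x \<le> y"
  using power_le_imp_le_base[of x "m - 1" y] assms by simp

text \<open>In the next two lemmas \<open>y\<close> stands for \<open>f w\<close>, \<open>a\<close> for \<open>1 - l\<close> and \<open>E\<close> for \<open>exp (m w)\<close>.\<close>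

lemma bernoulli_value_le_root:
  fixes y l a E :: real
  assumes m: "0 < m" and l: "0 < l" and a: "0 < a" and E: "0 < E"
    and y: "y ^ m * (l + a * E) = 1"
  shows "y \<le> root m (1 / l)" and "y \<le> root m (1 / (a * E))"
proof -
  have "0 < l + a * E" using l a E by (simp add: add_pos_pos)
  then have y_pow: "y ^ m = 1 / (l + a * E)"
    using y by (simp add: field_simps)
  have le_root: "y \<le> root m B" if "1 / (l + a * E) \<le> B" "0 \<le> B" for B
    by (rule pow_le_pow_imp_le[OF _ _ m]) (use that m y_pow in simp_all)
  show "y \<le> root m (1 / l)"
    by (rule le_root) (use l a E in \<open>simp_all add: frac_le\<close>)
  show "y \<le> root m (1 / (a * E))"
    by (rule le_root) (use l a E in \<open>simp_all add: frac_le\<close>)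
qed

lemma bernoulli_value_ge:
  fixes y l a E :: real
  assumes m: "0 < m" and l: "l \<le> 1" and a: "0 \<le> a" and E: "0 \<le> E"
    and y_pos: "0 < y" and y: "y ^ m * (l + a * E) = 1"
  shows "1 - a * E \<le> y"
proof (cases "a * E < 1")
  case True
  have lE: "0 < l + a * E"
    by (rule zero_less_mult_pos[of "y ^ m"]) (use y y_pos in simp_all)
  have "(1 - a * E) ^ m \<le> 1 - a * E"
    by (rule power_decreasing[of 1, simplified]) (use True m a E in auto)
  also have "\<dots> \<le> 1 / (l + a * E)"
  proof -
    have "(1 - a * E) * (l + a * E) \<le> (1 - a * E) * (1 + a * E)"
      using True l by (intro mult_left_mono) auto
    also have "\<dots> = 1 - (a * E)\<^sup>2" by (simp add: algebra_simps power2_eq_square)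
    also have "\<dots> \<le> 1" by simp
    finally show ?thesis using lE by (simp add: field_simps)
  qed
  also have "\<dots> = y ^ m" using y lE by (simp add: field_simps)
  finally show ?thesis
    by (rule pow_le_pow_imp_le) (use y_pos m in auto)
qed (use y_pos in auto)

lemma integral_atLeast_split:
  fixes f :: "real \<Rightarrow> real"
  assumes c: "0 \<le> c" and "f integrable_on {0..c}" and "f integrable_on {c..}"
  shows "integral {0..} f = integral {0..c} f + integral {c..} f"
proof -
  have "{0..} = {0..c} \<union> {c..}" and "{0..c} \<inter> {c..} = {c}" using c by auto
  then show ?thesis using integral_Un[OF assms(2,3)] by simp
qed

lemma integrable_bounded_by_exp_minus:
  fixes f :: "real \<Rightarrow> real"
  assumes cont: "continuous_on {c..} f"
    and bound: "\<And>x. c \<le> x \<Longrightarrow> \<bar>f x\<bar> \<le> b * exp (- x)"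
  shows "f integrable_on {c..}" and "integral {c..} f \<le> b * exp (- c)"
proof -
  have exp_int: "((\<lambda>x. b * exp (- x)) has_integral b * exp (- c)) {c..}"
    using has_integral_mult_right[OF has_integral_exp_minus_to_infinity[of 1 c]] by simp
  show int: "f integrable_on {c..}"
  proof (rule measurable_bounded_by_integrable_imp_integrable_real)
    show "f \<in> borel_measurable (lebesgue_on {c..})"
      by (intro continuous_imp_measurable_on_sets_lebesgue cont) auto
  qed (use exp_int bound in auto)
  have "integral {c..} f \<le> integral {c..} (\<lambda>x. b * exp (- x))"
    by (rule integral_le[OF int]) (use exp_int bound in \<open>auto simp: abs_le_iff\<close>)
  then show "integral {c..} f \<le> b * exp (- c)"
    using integral_unique[OF exp_int] by linarith
qed

lemma has_integral_one_minus_exp: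
  fixes a c k :: real
  assumes k: "0 < k" and c: "0 \<le> c"
  shows "((\<lambda>w. 1 - a * exp (k * w)) has_integral c - a * (exp (k * c) - 1) / k) {0..c}"
proof -
  have "((\<lambda>w. 1 - a * exp (k * w)) has_integral
        (c - a * exp (k * c) / k) - (0 - a * exp (k * 0) / k)) {0..c}"
  proof (rule fundamental_theorem_of_calculus[OF c])
    fix x assume "x \<in> {0..c}"
    have "((\<lambda>w. w - a * exp (k * w) / k) has_real_derivative 1 - a * exp (k * x))
          (at x within {0..c})"
      using k by (auto intro!: derivative_eq_intros)
    then show "((\<lambda>w. w - a * exp (k * w) / k) has_vector_derivative 1 - a * exp (k * x))
          (at x within {0..c})"
      by (simp add: has_real_derivative_iff_has_vector_derivative)
  qed
  then show ?thesis by (simp add: algebra_simps diff_divide_distrib)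
qed

lemma bernoulli_integral_bounds:
  fixes f :: "real \<Rightarrow> real" and l :: real and m :: nat
  assumes m: "0 < m" and l: "0 < l" "l < 1"
    and sol: "\<And>w. 0 \<le> w \<Longrightarrow> f w ^ m * (l + (1 - l) * exp (real m * w)) = 1"
    and pos: "\<And>w. 0 \<le> w \<Longrightarrow> 0 < f w"
    and cont: "continuous_on {0..} f"
  shows "- ln (1 - l) / m - 1 / m \<le> integral {0..} f"
    and "integral {0..} f \<le> - ln (1 - l) / m * root m (1 / l) + 1"
proof -
  define c where "c = - ln (1 - l) / m"
  have "ln (1 - l) < 0" using l by simp
  then have c: "0 < c" using m by (simp add: c_def divide_neg_pos)
  have exp_c: "exp (real m * c) = 1 / (1 - l)"
    using l m by (simp add: c_def exp_minus inverse_eq_divide)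
  have int_head: "f integrable_on {0..c}"
    by (intro integrable_continuous_interval continuous_on_subset[OF cont]) auto
  have tail: "\<bar>f w\<bar> \<le> exp c * exp (- w)" if w: "c \<le> w" for w
  proof -
    have "exp (w - c) ^ m = exp (real m * w) / exp (real m * c)"
      by (simp add: exp_diff power_divide exp_of_nat_mult)
    then have "(1 - l) * exp (real m * w) = exp (w - c) ^ m"
      using exp_c l by simp
    then have "root m (1 / ((1 - l) * exp (real m * w))) = exp (c - w)"
      using m by (intro real_root_pos_unique) (auto simp: exp_minus power_divide exp_diff)
    moreover have "f w \<le> root m (1 / ((1 - l) * exp (real m * w)))"
      using bernoulli_value_le_root(2)[OF m l(1) _ _ sol] w c l by simp
    ultimately show ?thesis
      using pos[of w] w c exp_add[of c "- w"] by simp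
  qed
  have "continuous_on {c..} f"
    using continuous_on_subset[OF cont] c by auto
  from integrable_bounded_by_exp_minus[OF this tail]
  have int_tail: "f integrable_on {c..}" and tail_le: "integral {c..} f \<le> 1"
    by (simp_all flip: exp_add)
  have split: "integral {0..} f = integral {0..c} f + integral {c..} f"
    using integral_atLeast_split[OF _ int_head int_tail] c by simp
  have "integral {0..c} f \<le> integral {0..c} (\<lambda>_. root m (1 / l))"
    by (rule integral_le[OF int_head])
      (use bernoulli_value_le_root(1)[OF m l(1) _ _ sol] l in auto)
  then show "integral {0..} f \<le> c * root m (1 / l) + 1"
    using split tail_le c by (simp add: mult.commute)
  have "c - 1 / m \<le> c - (1 - l) * (exp (real m * c) - 1) / m"
    using exp_c l m by (simp add: right_diff_distrib divide_right_mono)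
  also have "\<dots> \<le> integral {0..c} f"
  proof (rule has_integral_le[OF has_integral_one_minus_exp integrable_integral[OF int_head]])
    show "1 - (1 - l) * exp (real m * w) \<le> f w" if "w \<in> {0..c}" for w
      using bernoulli_value_ge[OF m _ _ _ pos sol] l that by simp
  qed (use m c in auto)
  also have "\<dots> \<le> integral {0..} f"
  proof -
    have "0 \<le> integral {c..} f"
      by (rule integral_nonneg[OF int_tail]) (use pos c in \<open>auto intro: less_imp_le\<close>)
    then show ?thesis using split by simp
  qed
  finally show "c - 1 / m \<le> integral {0..} f" .
qed

lemma tendsto_div_neg_ln_one_minus:
  fixes I :: "real \<Rightarrow> real" and m :: nat
  assumes m: "0 < m"
    and bounds: "\<And>l. 0 < l \<Longrightarrow> l < 1 \<Longrightarrow>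
      - ln (1 - l) / m - 1 / m \<le> I l \<and> I l \<le> - ln (1 - l) / m * root m (1 / l) + 1"
  shows "((\<lambda>l. - I l / ln (1 - l)) \<longlongrightarrow> 1 / m) (at_left 1)"
proof -
  define L where "L l = - ln (1 - l)" for l :: real
  have L_top: "filterlim L at_top (at_left 1)"
    unfolding L_def by real_asymp
  have inv_L: "((\<lambda>l. inverse (L l)) \<longlongrightarrow> 0) (at_left 1)"
    by (rule tendsto_inverse_0_at_top[OF L_top])
  have near_1: "\<forall>\<^sub>F l in at_left 1. l \<in> {0<..<1::real}"
    by (rule eventually_at_left_real) simp
  have "\<forall>\<^sub>F l in at_left 1. 1 / m - inverse (L l) / m \<le> I l / L l"
    using near_1
  proof eventually_elim
    case (elim l)
    then have L: "0 < L l" by (simp add: L_def)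
    have "1 / m - inverse (L l) / m = (L l / m - 1 / m) / L l"
      using L m by (simp add: field_simps)
    also have "\<dots> \<le> I l / L l"
      using bounds[of l] elim L by (intro divide_right_mono) (auto simp: L_def)
    finally show ?case .
  qed
  moreover have "\<forall>\<^sub>F l in at_left 1. I l / L l \<le> root m (1 / l) / m + inverse (L l)"
    using near_1
  proof eventually_elim
    case (elim l)
    then have L: "0 < L l" by (simp add: L_def)
    have "I l / L l \<le> (L l / m * root m (1 / l) + 1) / L l"
      using bounds[of l] elim L by (intro divide_right_mono) (auto simp: L_def)
    also have "\<dots> = root m (1 / l) / m + inverse (L l)"
      using L m by (simp add: field_simps)
    finally show ?case .
  qed
  moreover have "((\<lambda>l. 1 / m - inverse (L l) / m) \<longlongrightarrow> 1 / m) (at_left 1)"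
    using tendsto_diff[OF tendsto_const tendsto_divide[OF inv_L tendsto_const]] m by simp
  moreover have "((\<lambda>l. root m (1 / l) / m + inverse (L l)) \<longlongrightarrow> 1 / m) (at_left 1)"
  proof -
    have "((\<lambda>l. root m (1 / l)) \<longlongrightarrow> root m (1 / 1)) (at_left (1::real))"
      by (intro tendsto_intros) (auto intro: tendsto_ident_at)
    then show ?thesis
      using tendsto_add[OF tendsto_divide[OF _ tendsto_const] inv_L] m by fastforce
  qed
  ultimately have "((\<lambda>l. I l / L l) \<longlongrightarrow> 1 / m) (at_left 1)"
    by (rule tendsto_sandwich)
  then show ?thesis by (simp add: L_def)
qed

theorem corollary2p4:
  fixes d :: nat and F :: "real \<Rightarrow> real \<Rightarrow> real"
  assumes d: "d \<ge> 2"
    and init: "\<And>l. 0 < l \<Longrightarrow> l < 1 \<Longrightarrow> F l 0 = 1"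
    and ode: "\<And>l w. 0 < l \<Longrightarrow> l < 1 \<Longrightarrow> 0 \<le> w \<Longrightarrow>
               (F l has_real_derivative (l * F l w ^ d - F l w)) (at w within {0..})"
  shows "((\<lambda>l. - integral {0..} (F l) / ln (1 - l)) \<longlongrightarrow> 1 / (real d - 1)) (at_left 1)"
proof -
  define m where "m = d - 1"
  have m: "0 < m" and d_eq: "d = Suc m" using d by (auto simp: m_def)
  have "- ln (1 - l) / m - 1 / m \<le> integral {0..} (F l) \<and>
        integral {0..} (F l) \<le> - ln (1 - l) / m * root m (1 / l) + 1"
    if l: "0 < l" "l < 1" for l
  proof -
    have ode_l: "\<And>w. 0 \<le> w \<Longrightarrow>
        (F l has_real_derivative (l * F l w ^ Suc m - F l w)) (at w within {0..})"
      using ode[OF l] by (simp add: d_eq)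
    have "continuous_on {0..} (F l)"
      by (rule DERIV_continuous_on[OF ode_l]) auto
    from bernoulli_integral_bounds[OF m l bernoulli_ode_closed_form[OF m init[OF l] ode_l]
        bernoulli_ode_pos[OF m init[OF l] ode_l] this]
    show ?thesis ..
  qed
  from tendsto_div_neg_ln_one_minus[OF m this] show ?thesis
    by (simp add: d_eq)
qed

end
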